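(* Let $G^*$ and $G^*_u$ be as in the context. For any $S\subseteq[12]$ and $I=\{4,8,12\}\cap S$, we have $\mathsf{MAIS}(G^*_S)<\alpha(G^*_{S,u})$ if and only if either $S=\{2,10,7\}\cup I$ or $S=\{3,6,11\}\cup I$.
   Context: Consider the three-receiver unicast index coding problem with 12 messages indexed by $[12]$, where receiver $u_i$ demands the messages indexed by $W_i$ and knows those indexed by $K_i$: $W_1=\{1,2,3,4\}$, $W_2=\{5,6,7,8\}$, $W_3=\{9,10,11,12\}$, $K_1=\{5,6,9,10\}$, $K_2=\{1,2,9,11\}$, $K_3=\{1,3,5,7\}$. $G^*$ is the directed graph on vertex set $[12]$ with a directed edge $(a,b)$ iff $b\in K_i$, where $i$ is the unique index with $a\in W_i$. $G^*_u$ is the undirected graph on $[12]$ in which $\{a,b\}$ is an edge iff both $(a,b)$ and $(b,a)$ are edges of $G^*$. For $S\subseteq[12]$, $G^*_S$ and $G^*_{S,u}$ are the subgraphs of $G^*$ and $G^*_u$ induced by $S$. $\mathsf{MAIS}(D)$ is the maximum number of vertices of an acyclic induced subgraph of a directed graph $D$, and $\alpha(H)$ is the independence number of an undirected graph $H$. *)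

theory Defs
  imports Main
begin

text \<open>Demand sets W i and side-information sets K i of the three receivers.\<close>
definition W :: "nat \<Rightarrow> nat set" where
  "W i = (if i = 1 then {1,2,3,4} else if i = 2 then {5,6,7,8}
          else if i = 3 then {9,10,11,12} else {})"

definition K :: "nat \<Rightarrow> nat set" where
  "K i = (if i = 1 then {5,6,9,10} else if i = 2 then {1,2,9,11}
          else if i = 3 then {1,3,5,7} else {})"

definition Gstar_edge :: "nat \<Rightarrow> nat \<Rightarrow> bool" where
  "Gstar_edge a b \<longleftrightarrow> (\<exists>i\<in>{1,2,3}. a \<in> W i \<and> b \<in> K i)"

definition induced_rel :: "('a \<Rightarrow> 'a \<Rightarrow> bool) \<Rightarrow> 'a set \<Rightarrow> ('a \<times> 'a) set" where
  "induced_rel E S = {(a,b). a \<in> S \<and> b \<in> S \<and> E a b}"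

definition MAIS :: "('a \<Rightarrow> 'a \<Rightarrow> bool) \<Rightarrow> 'a set \<Rightarrow> nat" where
  "MAIS E S = Max {card T | T. T \<subseteq> S \<and> acyclic (induced_rel E T)}"

definition und_edge :: "('a \<Rightarrow> 'a \<Rightarrow> bool) \<Rightarrow> 'a \<Rightarrow> 'a \<Rightarrow> bool" where
  "und_edge E a b \<longleftrightarrow> E a b \<and> E b a"

definition indep_number :: "('a \<Rightarrow> 'a \<Rightarrow> bool) \<Rightarrow> 'a set \<Rightarrow> nat" where
  "indep_number H S = Max {card T | T. T \<subseteq> S \<and>
     (\<forall>a\<in>T. \<forall>b\<in>T. a \<noteq> b \<longrightarrow> \<not> H a b)}"

end

(*
  Inside an independent set of G*_u every edge of G* is one-way, and the one-way edges form a
  digraph whose only cycles are the directed triangles 2 -> 10 -> 7 -> 2 and 3 -> 6 -> 11 -> 3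
  (4, 8, 12 are sources and 1, 5, 9 sinks). Hence a maximum independent set containing no whole
  triangle is acyclic, and alpha <= MAIS. If it contains a triangle C, it lies inside
  C u {4,8,12}, because every other vertex has a neighbour in C; that neighbour is unique, so a
  vertex of S outside C u {4,8,12} can be swapped in for it, again yielding an acyclic
  independent set of maximum size. What remains is S = C u I: then S is independent but
  contains the cycle C, so MAIS < |S| = alpha.
*)
theory Submission
  imports Defs
begin

definition independent :: "('a \<Rightarrow> 'a \<Rightarrow> bool) \<Rightarrow> 'a set \<Rightarrow> bool" where
  "independent H T \<longleftrightarrow> (\<forall>a\<in>T. \<forall>b\<in>T. a \<noteq> b \<longrightarrow> \<not> H a b)"

lemma independentD: "independent H J \<Longrightarrow> a \<in> J \<Longrightarrow> b \<in> J \<Longrightarrow> a \<noteq> b \<Longrightarrow> \<not> H a b"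
  unfolding independent_def by blast

lemma independent_subset: "independent H U \<Longrightarrow> T \<subseteq> U \<Longrightarrow> independent H T"
  unfolding independent_def by blast

lemma finite_card_subsets: "finite S \<Longrightarrow> finite {card T | T. T \<subseteq> S \<and> P T}"
  by (rule finite_subset[of _ "{..card S}"]) (auto intro: card_mono)

lemma card_le_Max_card_subsets:
  assumes "finite S" "T \<subseteq> S" "P T"
  shows "card T \<le> Max {card T | T. T \<subseteq> S \<and> P T}"
  using assms by (intro Max_ge finite_card_subsets) auto

lemma Max_card_subsets_attained:
  assumes "finite S" "P {}"
  obtains T where "T \<subseteq> S" "P T" "card T = Max {card T | T. T \<subseteq> S \<and> P T}"
proof -
  have "Max {card T | T. T \<subseteq> S \<and> P T} \<in> {card T | T. T \<subseteq> S \<and> P T}"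
    using assms by (intro Max_in finite_card_subsets) auto
  then show thesis using that by auto
qed

lemma card_le_MAIS:
  "finite S \<Longrightarrow> T \<subseteq> S \<Longrightarrow> acyclic (induced_rel E T) \<Longrightarrow> card T \<le> MAIS E S"
  unfolding MAIS_def by (rule card_le_Max_card_subsets)

lemma MAIS_less_card:
  assumes "finite S" "\<not> acyclic (induced_rel E S)"
  shows "MAIS E S < card S"
proof -
  have "acyclic (induced_rel E {})"
    by (simp add: induced_rel_def acyclic_def)
  then obtain T where T: "T \<subseteq> S" "acyclic (induced_rel E T)" "card T = MAIS E S"
    using Max_card_subsets_attained[of S "\<lambda>T. acyclic (induced_rel E T)"] assms(1)
    unfolding MAIS_def by blast
  with assms have "T \<subset> S" by blast
  then show ?thesis using T assms(1) by (metis psubset_card_mono)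
qed

lemma indep_number_eq_Max_independent:
  "indep_number H S = Max {card T | T. T \<subseteq> S \<and> independent H T}"
  unfolding indep_number_def independent_def ..

lemma maximum_independent_subset:
  assumes "finite S"
  obtains J where "J \<subseteq> S" "independent H J" "card J = indep_number H S"
proof -
  have "independent H {}" by (simp add: independent_def)
  then show thesis
    using that Max_card_subsets_attained[of S "independent H"] assms
    unfolding indep_number_eq_Max_independent by blast
qed

lemma indep_number_eq_card:
  assumes "finite S" "independent H S"
  shows "indep_number H S = card S"
proof (rule antisym)
  obtain T where "T \<subseteq> S" "card T = indep_number H S"
    using maximum_independent_subset[OF assms(1)] by blast
  then show "indep_number H S \<le> card S"
    using assms(1) by (metis card_mono)
  show "card S \<le> indep_number H S"
    unfolding indep_number_eq_Max_independent using assms by (intro card_le_Max_card_subsets) auto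
qed

lemma acyclic_induced_relI:
  assumes "\<And>a b. a \<in> T \<Longrightarrow> b \<in> T \<Longrightarrow> E a b \<Longrightarrow> f a < (f b :: nat)"
  shows "acyclic (induced_rel E T)"
proof -
  have "f x < f y" if "(x, y) \<in> (induced_rel E T)\<^sup>+" for x y
    using that
  proof (induction rule: trancl_induct)
    case (base y)
    then show ?case using assms by (auto simp: induced_rel_def)
  next
    case (step y z)
    then show ?case using assms by (fastforce simp: induced_rel_def)
  qed
  then show ?thesis unfolding acyclic_def by blast
qed

lemma not_acyclic_induced_rel_if_cycle:
  assumes "{(c1, c2), (c2, c3), (c3, c1)} \<subseteq> induced_rel E S"
  shows "\<not> acyclic (induced_rel E S)"
proof -
  have "(c1, c1) \<in> (induced_rel E S)\<^sup>+"
    using assms by (meson insert_subset r_into_trancl trancl_into_trancl)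
  then show ?thesis unfolding acyclic_def by blast
qed

lemma Gstar_edge_iff:
  "Gstar_edge a b \<longleftrightarrow>
     a \<in> {1,2,3,4} \<and> b \<in> {5,6,9,10} \<or> a \<in> {5,6,7,8} \<and> b \<in> {1,2,9,11} \<or>
     a \<in> {9,10,11,12} \<and> b \<in> {1,3,5,7}"
  by (auto simp: Gstar_edge_def W_def K_def)

lemma Gstar_edge_irrefl: "\<not> Gstar_edge v v"
  by (auto simp: Gstar_edge_def W_def K_def)

lemma atLeastAtMost_1_12: "{1..12::nat} = {1,2,3,4,5,6,7,8,9,10,11,12}"
  by (auto; presburger)

definition triangles :: "nat set set" where
  "triangles = {{2,10,7}, {3,6,11}}"

text \<open>Successor along the directed triangles 2 \<rightarrow> 10 \<rightarrow> 7 \<rightarrow> 2 and 3 \<rightarrow> 6 \<rightarrow> 11 \<rightarrow> 3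
  (junk value 3 off the triangles).\<close>
definition triangle_succ :: "nat \<Rightarrow> nat" where
  "triangle_succ v = (if v = 2 then 10 else if v = 10 then 7 else if v = 7 then 2
     else if v = 3 then 6 else if v = 6 then 11 else 3)"

lemma triangle_independent:
  "C \<in> triangles \<Longrightarrow> independent (und_edge Gstar_edge) (C \<union> {4,8,12})"
  unfolding triangles_def
  by (elim insertE emptyE) (simp_all add: independent_def und_edge_def Gstar_edge_iff)

lemma triangle_not_acyclic:
  assumes "C \<in> triangles" "C \<subseteq> S"
  shows "\<not> acyclic (induced_rel Gstar_edge S)"
proof -
  from assms consider "{2,10,7} \<subseteq> S" | "{3,6,11} \<subseteq> S"
    unfolding triangles_def by blast
  then show ?thesis
  proof cases
    case 1
    then show ?thesis
      by (intro not_acyclic_induced_rel_if_cycle[of 2 10 7])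
        (auto simp: induced_rel_def Gstar_edge_iff)
  next
    case 2
    then show ?thesis
      by (intro not_acyclic_induced_rel_if_cycle[of 3 6 11])
        (auto simp: induced_rel_def Gstar_edge_iff)
  qed
qed

lemma Gstar_oneway_edge_cases:
  assumes "Gstar_edge v w" "\<not> Gstar_edge w v"
  shows "v \<in> {4,8,12} \<and> w \<notin> {4,8,12} \<or> v \<notin> {1,5,9} \<and> w \<in> {1,5,9} \<or>
         v \<in> {2,3,6,7,10,11} \<and> w = triangle_succ v"
  using assms unfolding Gstar_edge_iff triangle_succ_def
  by (elim disjE conjE insertE emptyE) simp_all

lemma acyclic_if_triangle_free:
  assumes "independent (und_edge Gstar_edge) J" "\<forall>C\<in>triangles. \<not> C \<subseteq> J"
  shows "acyclic (induced_rel Gstar_edge J)"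
proof -
  obtain a b where ab: "a \<in> {2,10,7}" "a \<notin> J" "b \<in> {3,6,11}" "b \<notin> J"
    using assms(2) unfolding triangles_def by auto
  txt \<open>Sources first, sinks last, and each triangle broken into a path at its missing vertex.\<close>
  define rank :: "nat \<Rightarrow> nat" where
    "rank v = (if v \<in> {4,8,12} then 0 else if v \<in> {1,5,9} then 3
       else if v \<in> {triangle_succ a, triangle_succ b} then 1 else 2)" for v
  show ?thesis
  proof (rule acyclic_induced_relI[where f = rank])
    fix v w assume vw: "v \<in> J" "w \<in> J" "Gstar_edge v w"
    then have "v \<noteq> w" using Gstar_edge_irrefl by blast
    with vw assms(1) have "\<not> Gstar_edge w v"
      unfolding independent_def und_edge_def by blast
    with vw(3) consider "v \<in> {4,8,12}" "w \<notin> {4,8,12}" | "v \<notin> {1,5,9}" "w \<in> {1,5,9}"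
      | "v \<in> {2,3,6,7,10,11}" "w = triangle_succ v"
      using Gstar_oneway_edge_cases by blast
    then show "rank v < rank w"
    proof cases
      case 1
      then show ?thesis by (simp add: rank_def)
    next
      case 2
      then show ?thesis by (auto simp: rank_def)
    next
      case 3
      then show ?thesis
        using ab vw(1,2) unfolding rank_def triangle_succ_def
        by (elim insertE emptyE) simp_all
    qed
  qed
qed

lemma unique_triangle_neighbour:
  assumes "C \<in> triangles" "x \<in> {1..12}" "x \<notin> C \<union> {4,8,12}"
  shows "\<exists>y\<in>C. \<forall>z\<in>C \<union> {4,8,12}. und_edge Gstar_edge x z \<longleftrightarrow> z = y"
  using assms unfolding triangles_def atLeastAtMost_1_12
  by (elim insertE emptyE) (simp_all add: und_edge_def Gstar_edge_iff)

lemma triangle_not_subset_after_swap: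
  assumes "C \<in> triangles" "C' \<in> triangles" "y \<in> C" "x \<notin> C"
  shows "\<not> C' \<subseteq> insert x (C - {y} \<union> {4,8,12})"
  using assms unfolding triangles_def by (elim insertE emptyE) simp_all

lemma independent_triangle_subset:
  assumes "J \<subseteq> {1..12}" "independent (und_edge Gstar_edge) J" "C \<in> triangles" "C \<subseteq> J"
  shows "J \<subseteq> C \<union> {4,8,12}"
proof
  fix v assume v: "v \<in> J"
  show "v \<in> C \<union> {4,8,12}"
  proof (rule ccontr)
    assume v_out: "v \<notin> C \<union> {4,8,12}"
    moreover have "v \<in> {1..12}" using v assms(1) by blast
    ultimately obtain y where y: "y \<in> C" "\<forall>z\<in>C \<union> {4,8,12}. und_edge Gstar_edge v z \<longleftrightarrow> z = y"
      using unique_triangle_neighbour[OF assms(3)] by blast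
    then have "und_edge Gstar_edge v y" by blast
    moreover have "y \<in> J" "v \<noteq> y" using y(1) v_out assms(4) by blast+
    ultimately show False
      using independentD[OF assms(2) v] by blast
  qed
qed

lemma independent_insert:
  assumes "independent H J" "\<And>z. z \<in> J \<Longrightarrow> z \<noteq> x \<Longrightarrow> \<not> H x z \<and> \<not> H z x"
  shows "independent H (insert x J)"
  using assms unfolding independent_def by blast

lemma und_edge_commute: "und_edge E a b \<longleftrightarrow> und_edge E b a"
  unfolding und_edge_def by blast

lemma card_insert_Diff_swap:
  assumes "finite J" "y \<in> J" "x \<notin> J"
  shows "card (insert x (J - {y})) = card J"
proof -
  have "card (insert x (J - {y})) = Suc (card (J - {y}))"
    using assms by simp
  also have "\<dots> = card J"
    using card.remove[OF assms(1,2)] by simp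
  finally show ?thesis .
qed

lemma swap_out_of_triangle:
  assumes S: "S \<subseteq> {1..12}" and J: "J \<subseteq> S" "independent (und_edge Gstar_edge) J"
    and C: "C \<in> triangles" "C \<subseteq> J" and x: "x \<in> S" "x \<notin> C \<union> {4,8,12}"
  obtains J' where "J' \<subseteq> S" "independent (und_edge Gstar_edge) J'" "card J' = card J"
    "\<forall>C'\<in>triangles. \<not> C' \<subseteq> J'"
proof -
  have "x \<in> {1..12}" using x(1) S by blast
  then obtain y where y: "y \<in> C" "\<forall>z\<in>C \<union> {4,8,12}. und_edge Gstar_edge x z \<longleftrightarrow> z = y"
    using unique_triangle_neighbour[OF C(1) _ x(2)] by blast
  have J_sub: "J \<subseteq> C \<union> {4,8,12}"
    using independent_triangle_subset[OF _ J(2) C] S J(1) by blast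
  define J' where "J' = insert x (J - {y})"
  have "J' \<subseteq> S" using J(1) x(1) unfolding J'_def by blast
  moreover have "independent (und_edge Gstar_edge) J'"
    unfolding J'_def
  proof (rule independent_insert)
    show "independent (und_edge Gstar_edge) (J - {y})"
      using independent_subset[OF J(2)] by blast
    fix z assume "z \<in> J - {y}"
    then have "\<not> und_edge Gstar_edge x z" using J_sub y(2) by blast
    then show "\<not> und_edge Gstar_edge x z \<and> \<not> und_edge Gstar_edge z x"
      using und_edge_commute by metis
  qed
  moreover have "card J' = card J"
  proof -
    have "finite J" using J(1) S by (meson finite_atLeastAtMost finite_subset subset_trans)
    moreover have "y \<in> J" "x \<notin> J" using y(1) C(2) J_sub x(2) by blast+
    ultimately show ?thesis unfolding J'_def by (rule card_insert_Diff_swap)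
  qed
  moreover have "\<forall>C'\<in>triangles. \<not> C' \<subseteq> J'"
  proof
    fix C' assume "C' \<in> triangles"
    then have "\<not> C' \<subseteq> insert x (C - {y} \<union> {4,8,12})"
      using triangle_not_subset_after_swap[OF C(1) _ y(1)] x(2) by blast
    moreover have "J' \<subseteq> insert x (C - {y} \<union> {4,8,12})"
      using J_sub unfolding J'_def by blast
    ultimately show "\<not> C' \<subseteq> J'" by blast
  qed
  ultimately show thesis using that by blast
qed

lemma eq_Un_Int_self_iff: "S = A \<union> (B \<inter> S) \<longleftrightarrow> A \<subseteq> S \<and> S \<subseteq> A \<union> B"
  by blast

lemma indep_number_le_MAIS:
  assumes S: "S \<subseteq> {1..12}"
    and not_exceptional: "\<forall>C\<in>triangles. C \<subseteq> S \<longrightarrow> \<not> S \<subseteq> C \<union> {4,8,12}"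
  shows "indep_number (und_edge Gstar_edge) S \<le> MAIS Gstar_edge S"
proof -
  have fin: "finite S" using S by (rule finite_subset) simp
  obtain J where J: "J \<subseteq> S" "independent (und_edge Gstar_edge) J"
    "card J = indep_number (und_edge Gstar_edge) S"
    using maximum_independent_subset[OF fin] by blast
  obtain J' where J': "J' \<subseteq> S" "independent (und_edge Gstar_edge) J'" "card J' = card J"
    "\<forall>C\<in>triangles. \<not> C \<subseteq> J'"
  proof (cases "\<exists>C\<in>triangles. C \<subseteq> J")
    case True
    then obtain C where C: "C \<in> triangles" "C \<subseteq> J" by blast
    with not_exceptional J(1) have "\<not> S \<subseteq> C \<union> {4,8,12}" by blast
    then obtain x where "x \<in> S" "x \<notin> C \<union> {4,8,12}" by blast
    then show thesis using swap_out_of_triangle[OF S J(1,2) C] that by blast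
  next
    case False
    then show thesis using that J by blast
  qed
  have "indep_number (und_edge Gstar_edge) S = card J'"
    using J(3) J'(3) by simp
  also have "\<dots> \<le> MAIS Gstar_edge S"
    using card_le_MAIS[OF fin J'(1) acyclic_if_triangle_free[OF J'(2,4)]] .
  finally show ?thesis .
qed

lemma MAIS_less_indep_number:
  assumes C: "C \<in> triangles" "C \<subseteq> S" and S: "S \<subseteq> C \<union> {4,8,12}"
  shows "MAIS Gstar_edge S < indep_number (und_edge Gstar_edge) S"
proof -
  have "finite (C \<union> {4,8,12})" using C(1) unfolding triangles_def by auto
  with S have fin: "finite S" by (rule finite_subset)
  have "MAIS Gstar_edge S < card S"
    using MAIS_less_card[OF fin triangle_not_acyclic[OF C]] .
  also have "card S = indep_number (und_edge Gstar_edge) S"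
    using indep_number_eq_card[OF fin independent_subset[OF triangle_independent[OF C(1)] S]] ..
  finally show ?thesis .
qed

theorem theorem4:
  fixes S :: "nat set"
  assumes "S \<subseteq> {1..12}"
  shows "MAIS Gstar_edge S < indep_number (und_edge Gstar_edge) S \<longleftrightarrow>
         (S = {2,10,7} \<union> ({4,8,12} \<inter> S) \<or> S = {3,6,11} \<union> ({4,8,12} \<inter> S))"
proof -
  have exceptional: "(S = {2,10,7} \<union> ({4,8,12} \<inter> S) \<or> S = {3,6,11} \<union> ({4,8,12} \<inter> S)) \<longleftrightarrow>
      (\<exists>C\<in>triangles. C \<subseteq> S \<and> S \<subseteq> C \<union> {4,8,12})"
    unfolding triangles_def eq_Un_Int_self_iff by simp
  show ?thesis
    unfolding exceptional
  proof
    assume less: "MAIS Gstar_edge S < indep_number (und_edge Gstar_edge) S"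
    show "\<exists>C\<in>triangles. C \<subseteq> S \<and> S \<subseteq> C \<union> {4,8,12}"
    proof (rule ccontr)
      assume "\<not> ?thesis"
      then have "indep_number (und_edge Gstar_edge) S \<le> MAIS Gstar_edge S"
        using indep_number_le_MAIS[OF assms] by blast
      with less show False by simp
    qed
  next
    assume "\<exists>C\<in>triangles. C \<subseteq> S \<and> S \<subseteq> C \<union> {4,8,12}"
    then show "MAIS Gstar_edge S < indep_number (und_edge Gstar_edge) S"
      using MAIS_less_indep_number by blast
  qed
qed

end
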